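(* Let $C(x)=\log_2(1+x)$. A device $U_i$ transmits to a machine-type device $M_i$ at fixed rate $R_M>0$ with power $P_{U_i}$, while a device $U_j$ simultaneously transmits to base station $B$ with power $P_{U_j}\in[0,P_U^{Max}]$ and rate $R_{U_j}$. The constraints are: (i) $M_i$ must decode $U_i$ treating $U_j$ as noise, i.e. $P_{U_j}\le P^\ast_{U_j}:=\left(\frac{P_{U_i}|h_{U_i,M_i}|^2}{2^{R_M}-1}-\sigma_M^2\right)\frac{1}{|h_{U_j,M_i}|^2}$; (ii) at $B$, $$R_{U_j}\le\begin{cases}C(\gamma_{U_j,B}) & \text{if } R_M\le C\!\left(\frac{\gamma_{U_i,B}}{1+\gamma_{U_j,B}}\right),\\ C\!\left(\frac{\gamma_{U_j,B}}{1+\gamma_{U_i,B}}\right) & \text{if } R_M> C\!\left(\frac{\gamma_{U_i,B}}{1+\gamma_{U_j,B}}\right).\end{cases}$$ Define $$P^{(1)}_{U_j}=\min\left[P_U^{Max},\ \left(\frac{P_{U_i}|h_{U_i,B}|^2}{2^{R_M}-1}-\sigma_B^2\right)\frac{1}{|h_{U_j,B}|^2},\ P^\ast_{U_j}\right],\qquad P^{(2)}_{U_j}=\min\left[P_U^{Max},\ P^\ast_{U_j}\right],$$ and let $\gamma^{(m)}_{U_j,B}=P^{(m)}_{U_j}|h_{U_j,B}|^2/\sigma_B^2$. Then every rate $R_{U_j,B}$ achievable by $U_j$ under these constraints satisfies $$R_{U_j,B}\le\max\left[C\big(\gamma^{(1)}_{U_j,B}\big),\ C\!\left(\frac{\ga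mma^{(2)}_{U_j,B}}{1+\gamma_{U_i,B}}\right)\right].$$
   Context: $|h_{X,Y}|^2>0$ are instantaneous channel power gains, $\sigma_M^2$ and $\sigma_B^2$ are the noise variances at $M_i$ and $B$, $\gamma_{X,B}=P_X|h_{X,B}|^2/\sigma_B^2$, and $P_U^{Max}$ is the maximal device transmit power. $M_i$ cannot perform interference cancellation, while $B$ receives the signals of $U_i$ and $U_j$ over a Gaussian multiple access channel and may decode and cancel $U_i$'s signal before decoding $U_j$'s. *)

theory Defs
  imports Complex_Main
begin

definition C :: "real \<Rightarrow> real" where
  "C x = log 2 (1 + x)"

end

theory Submission
  imports Defs
begin

text \<open>If the base station can decode U_i first while treating U_j as noise, this SINR
  condition caps the power of U_j by the second term in the definition of P^(1); U_j is then
  decoded interference-free and its rate is at most C(gamma^(1)). Otherwise U_j is decoded with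
  U_i as noise, only the power budget and constraint (i) remain, and the second term bounds the
  rate. Both cases reduce to monotonicity of C.\<close>

lemma C_mono: "0 \<le> x \<Longrightarrow> x \<le> y \<Longrightarrow> C x \<le> C y"
  unfolding C_def by simp

lemma powr_minus_one_le_if_le_C:
  assumes "R \<le> C x" "0 \<le> x"
  shows "2 powr R - 1 \<le> x"
proof -
  have "2 powr R \<le> 2 powr (log 2 (1 + x))"
    using assms unfolding C_def by (intro powr_mono) auto
  also have "\<dots> = 1 + x"
    using assms(2) by simp
  finally show ?thesis by simp
qed

lemma power_le_of_rate_le_C_sinr:
  fixes R P Q g h s :: real
  assumes "R > 0" "h > 0" "s > 0" "0 \<le> P" "0 \<le> Q" "0 \<le> g"
    and rate: "R \<le> C ((Q * g / s) / (1 + P * h / s))"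
  shows "P \<le> (Q * g / (2 powr R - 1) - s) / h"
proof -
  have sinr_eq: "(Q * g / s) / (1 + P * h / s) = Q * g / (s + P * h)"
    using assms(3) by (simp add: field_simps)
  have "2 powr R - 1 \<le> (Q * g / s) / (1 + P * h / s)"
    using assms by (intro powr_minus_one_le_if_le_C[OF rate]) simp
  hence "2 powr R - 1 \<le> Q * g / (s + P * h)"
    by (simp only: sinr_eq)
  hence "(2 powr R - 1) * (s + P * h) \<le> Q * g"
    using assms by (simp add: pos_le_divide_eq add_pos_nonneg)
  moreover have "2 powr R - 1 > 0"
    using assms(1) by simp
  ultimately have "s + P * h \<le> Q * g / (2 powr R - 1)"
    by (simp add: pos_le_divide_eq mult.commute)
  thus ?thesis
    using assms(2) by (simp add: pos_le_divide_eq)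
qed

lemma C_snr_mono:
  fixes P P' h s a :: real
  assumes "0 \<le> P" "P \<le> P'" "0 \<le> h" "0 < s" "0 \<le> a"
  shows "C (P * h / s / (1 + a)) \<le> C (P' * h / s / (1 + a))"
  using assms by (intro C_mono divide_right_mono mult_right_mono) auto

theorem theorem2:
  fixes R_M P_Ui P_Uj P_max R_Uj sigmaM2 sigmaB2
        hUiMi hUjMi hUiB hUjB :: real
  assumes RM_pos: "R_M > 0"
    and gains: "hUiMi > 0" "hUjMi > 0" "hUiB > 0" "hUjB > 0"
    and noise: "sigmaM2 > 0" "sigmaB2 > 0"
    and PUi_nonneg: "P_Ui \<ge> 0"
    and PUj_range: "0 \<le> P_Uj" "P_Uj \<le> P_max"
    and c1: "P_Uj \<le> (P_Ui * hUiMi / (2 powr R_M - 1) - sigmaM2) / hUjMi"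
    and c2: "R_Uj \<le>
      (if R_M \<le> C ((P_Ui * hUiB / sigmaB2) / (1 + P_Uj * hUjB / sigmaB2))
       then C (P_Uj * hUjB / sigmaB2)
       else C ((P_Uj * hUjB / sigmaB2) / (1 + P_Ui * hUiB / sigmaB2)))"
  shows "R_Uj \<le>
    (let Pstar = (P_Ui * hUiMi / (2 powr R_M - 1) - sigmaM2) / hUjMi;
         P1 = min P_max (min ((P_Ui * hUiB / (2 powr R_M - 1) - sigmaB2) / hUjB) Pstar);
         P2 = min P_max Pstar
     in max (C (P1 * hUjB / sigmaB2))
            (C ((P2 * hUjB / sigmaB2) / (1 + P_Ui * hUiB / sigmaB2))))"
proof -
  define Pstar where "Pstar = (P_Ui * hUiMi / (2 powr R_M - 1) - sigmaM2) / hUjMi"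
  define Q where "Q = (P_Ui * hUiB / (2 powr R_M - 1) - sigmaB2) / hUjB"
  define a where "a = P_Ui * hUiB / sigmaB2"
  have P2: "P_Uj \<le> min P_max Pstar"
    using c1 PUj_range unfolding Pstar_def by simp
  have a_nonneg: "0 \<le> a"
    using PUi_nonneg gains noise unfolding a_def by simp
  show ?thesis
  proof (cases "R_M \<le> C (a / (1 + P_Uj * hUjB / sigmaB2))")
    case True
    have "P_Uj \<le> Q"
      using power_le_of_rate_le_C_sinr[OF RM_pos gains(4) noise(2) PUj_range(1) PUi_nonneg
          _ True[unfolded a_def]] gains unfolding Q_def by simp
    with P2 have P1: "P_Uj \<le> min P_max (min Q Pstar)"
      by simp
    have "R_Uj \<le> C (P_Uj * hUjB / sigmaB2)"
      using c2 True unfolding a_def by simp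
    also have "\<dots> \<le> C (min P_max (min Q Pstar) * hUjB / sigmaB2)"
      using C_snr_mono[OF PUj_range(1) P1 _ noise(2), of hUjB 0] gains by simp
    finally show ?thesis
      unfolding Let_def Pstar_def[symmetric] Q_def[symmetric] by simp
  next
    case False
    have "R_Uj \<le> C (P_Uj * hUjB / sigmaB2 / (1 + a))"
      using c2 False unfolding a_def by simp
    also have "\<dots> \<le> C (min P_max Pstar * hUjB / sigmaB2 / (1 + a))"
      using C_snr_mono[OF PUj_range(1) P2 _ noise(2) a_nonneg] gains by simp
    finally show ?thesis
      unfolding Let_def Pstar_def[symmetric] a_def[symmetric] by simp
  qed
qed

end
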